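(* $F_{\{3,8\},\{0\}}$ is nonempty (the bisectors $\mathcal{B}_3$ and $\mathcal{B}_8$ meet in $H^2_\mathbb{C}$), but $\overline{F}_{\{3,8\},\{0,2,6\}}=\emptyset$. In particular $F_{\{3,8\}}=\emptyset$.
   Context: Hermitian form on $\mathbb{C}^3$: $\langle V,W\rangle=V_1\overline{W_3}+V_2\overline{W_2}+V_3\overline{W_1}$. Let $$G_1=\begin{pmatrix}1&1&-\frac{1+i\sqrt7}{2}\\0&1&-1\\0&0&1\end{pmatrix},\quad G_3=\begin{pmatrix}1&0&0\\-1&1&0\\ \frac{-1+i\sqrt7}{2}&1&1\end{pmatrix},\quad G_2=G_3G_1^{-1}G_3^{-1}G_1,$$ $Q=(1,0,0)^T$. Set $\gamma_1=G_2,\gamma_2=G_2^{-1},\gamma_3=G_3,\gamma_4=G_3^{-1}$ and, for $k\ge1$ and $1\le j\le4$, $\gamma_{8k-4+j}=G_1^k\gamma_jG_1^{-k}$, $\gamma_{8k+j}=G_1^{-k}\gamma_jG_1^{k}$. For $Z\in\mathbb{C}^3\setminus\{0\}$ let $f_0(Z)=\langle Z,Z\rangle$ and $f_j(Z)=|\langle Z,Q\rangle|^2-|\langle Z,\gamma_jQ\rangle|^2$ for $j\ge1$ (signs defined on $\mathbb{C}P^2$); $\mathcal{B}_j=\{f_j=0,f_0<0\}$. Let $I=\{0,1,2,\dots\}$. For disjoint $J,K\subset I$, $F_{J,K}=\{[Z]\in\mathbb{C}P^2: f_j(Z)=0\ \forall j\in J,\ f_i(Z)<0\ \forall i\in K\}$,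 $\overline{F}_{J,K}$ is defined likewise with $f_i\le0$ for $i\in K$, and $F_J=F_{J,I\setminus J}$. *)

theory Defs
  imports "HOL-Analysis.Analysis"
begin

type_synonym cvec = "complex ^ 3"
type_synonym cmat = "complex ^ 3 ^ 3"

definition herm :: "cvec \<Rightarrow> cvec \<Rightarrow> complex" where
  "herm V W = V$1 * cnj (W$3) + V$2 * cnj (W$2) + V$3 * cnj (W$1)"

definition G1 :: cmat where
  "G1 = vector [vector [1, 1, - (1 + \<i> * complex_of_real (sqrt 7)) / 2],
                vector [0, 1, -1],
                vector [0, 0, 1]]"

definition G3 :: cmat where
  "G3 = vector [vector [1, 0, 0],
                vector [-1, 1, 0],
                vector [(-1 + \<i> * complex_of_real (sqrt 7)) / 2, 1, 1]]"

definition G2 :: cmat where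
  "G2 = G3 ** matrix_inv G1 ** matrix_inv G3 ** G1"

definition Qpt :: cvec where
  "Qpt = vector [1, 0, 0]"

definition mpow :: "cmat \<Rightarrow> nat \<Rightarrow> cmat" where
  "mpow A k = ((\<lambda>B. A ** B) ^^ k) (mat 1)"

definition gamma_base :: "nat \<Rightarrow> cmat" where
  "gamma_base i = (if i = 1 then G2 else if i = 2 then matrix_inv G2
                   else if i = 3 then G3 else matrix_inv G3)"

text \<open>gamma_j for j >= 1: writing j - 1 = 4 m + (r - 1) with 1 <= r <= 4,
  m = 0 gives gamma_r; m = 2k-1 (odd) gives j = 8k-4+r and gamma_j = G1^k gamma_r G1^-k;
  m = 2k (even, positive) gives j = 8k+r and gamma_j = G1^-k gamma_r G1^k.\<close>
definition gamma :: "nat \<Rightarrow> cmat" where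
  "gamma j = (let m = (j - 1) div 4; r = (j - 1) mod 4 + 1 in
     if m = 0 then gamma_base r
     else if odd m then
       (let P = mpow G1 ((m + 1) div 2) in P ** gamma_base r ** matrix_inv P)
     else
       (let P = matrix_inv (mpow G1 (m div 2)) in P ** gamma_base r ** matrix_inv P))"

definition f :: "nat \<Rightarrow> cvec \<Rightarrow> real" where
  "f j Z = (if j = 0 then Re (herm Z Z)
            else (cmod (herm Z Qpt))\<^sup>2 - (cmod (herm Z (gamma j *v Qpt)))\<^sup>2)"

text \<open>Subsets of CP^2 are represented by their cones of nonzero representatives
  in C^3; all conditions are invariant under nonzero complex scaling.\<close>
definition F_JK :: "nat set \<Rightarrow> nat set \<Rightarrow> cvec set" where
  "F_JK J K = {Z. Z \<noteq> 0 \<and> (\<forall>j\<in>J. f j Z = 0) \<and> (\<forall>i\<in>K. f i Z < 0)}"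

definition Fbar_JK :: "nat set \<Rightarrow> nat set \<Rightarrow> cvec set" where
  "Fbar_JK J K = {Z. Z \<noteq> 0 \<and> (\<forall>j\<in>J. f j Z = 0) \<and> (\<forall>i\<in>K. f i Z \<le> 0)}"

definition F_J :: "nat set \<Rightarrow> cvec set" where
  "F_J J = F_JK J (UNIV - J)"

end

theory Submission
  imports Defs
begin

(*
  After computing the inverses of G1, G3, G2 explicitly (entries in
  Q(i sqrt 7)), the relevant images gamma_j Q (j = 2, 3, 6, 8) are explicit vectors, so
  every f_j is an explicit Hermitian expression in Z.  The emptiness claim follows from
  the identity
     2 f_0 + f_2 + f_6 - f_3 - f_8 = 2|Z1 - w Z2|^2 + 2|Z2 + Z3/2|^2 + |Z3|^2/2,
  with w = (1 + i sqrt 7)/2: the right side is positive for Z \<noteq> 0, whereas on the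
  closed face the left side is \<le> 0.  Nonemptiness is witnessed by an explicit vector
  Z_witness lying on both bisectors with <Z,Z> = 260 - 120 sqrt 7 < 0.
  The file first collects coordinate formulas for 3x3 matrices and a uniqueness
  principle for matrix_inv, then the explicit group elements, then the two halves.
*)

lemma vector3_eq_iff:
  "(vector [a, b, c] :: 'a::zero ^ 3) = vector [d, e, g] \<longleftrightarrow> a = d \<and> b = e \<and> c = g"
  by (auto simp: vec_eq_iff forall_3)

lemma mat1_3x3: "(mat 1 :: 'a::{zero,one} ^ 3 ^ 3) = vector [vector [1,0,0], vector [0,1,0], vector [0,0,1]]"
  by (simp add: vec_eq_iff forall_3 mat_def)

lemma matrix_matrix_mult_3x3:
  "(vector [vector [a11,a12,a13], vector [a21,a22,a23], vector [a31,a32,a33]] :: 'a::semiring_1 ^ 3 ^ 3) **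
   (vector [vector [b11,b12,b13], vector [b21,b22,b23], vector [b31,b32,b33]] :: 'a ^ 3 ^ 3) =
   vector [vector [a11*b11+a12*b21+a13*b31, a11*b12+a12*b22+a13*b32, a11*b13+a12*b23+a13*b33],
           vector [a21*b11+a22*b21+a23*b31, a21*b12+a22*b22+a23*b32, a21*b13+a22*b23+a23*b33],
           vector [a31*b11+a32*b21+a33*b31, a31*b12+a32*b22+a33*b32, a31*b13+a32*b23+a33*b33]]"
  by (simp add: vec_eq_iff matrix_matrix_mult_def sum_3 forall_3)

lemma matrix_vector_mult_3x3:
  "(vector [vector [a11,a12,a13], vector [a21,a22,a23], vector [a31,a32,a33]] :: 'a::semiring_1 ^ 3 ^ 3) *v
   vector [b1, b2, b3] = vector [a11*b1+a12*b2+a13*b3, a21*b1+a22*b2+a23*b3, a31*b1+a32*b2+a33*b3]"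
  by (simp add: vec_eq_iff matrix_vector_mult_def sum_3 forall_3)

(* matrix_inv is defined by a choice; any two-sided inverse is the chosen one. *)
lemma matrix_inv_eqI:
  fixes A :: "'a::semiring_1 ^ 'n ^ 'm" and B :: "'a ^ 'm ^ 'n"
  assumes AB: "A ** B = mat 1" and BA: "B ** A = mat 1"
  shows "matrix_inv A = B"
proof -
  let ?C = "matrix_inv A"
  have C: "A ** ?C = mat 1 \<and> ?C ** A = mat 1"
    unfolding matrix_inv_def by (rule someI[of _ B]) (use AB BA in blast)
  have "?C = ?C ** (A ** B)" using AB by simp
  also have "\<dots> = (?C ** A) ** B" by (simp add: matrix_mul_assoc)
  also have "\<dots> = B" using C by simp
  finally show ?thesis .
qed

(* sqrt 7 kept as an opaque constant, so that simp only uses r7 * r7 = 7. *)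
definition r7 :: real where
  "r7 = sqrt 7"

abbreviation i_r7 :: complex where
  "i_r7 \<equiv> \<i> * complex_of_real r7"

lemma r7_square: "r7 * r7 = 7"
  by (simp add: r7_def)

lemma r7_square_left: "r7 * (r7 * x) = 7 * x"
  by (simp add: r7_square mult.assoc[symmetric])

lemma of_r7_square: "complex_of_real r7 * complex_of_real r7 = 7"
  by (simp add: of_real_mult[symmetric] r7_square)

lemma of_r7_square_left: "complex_of_real r7 * (complex_of_real r7 * z) = 7 * z"
  by (simp add: mult.assoc[symmetric] of_real_mult[symmetric] r7_square)

lemma G1_coords: "G1 = vector [vector [1, 1, - (1 + i_r7) / 2], vector [0, 1, -1], vector [0, 0, 1]]"
  unfolding G1_def r7_def ..

lemma G3_coords: "G3 = vector [vector [1, 0, 0], vector [-1, 1, 0], vector [(-1 + i_r7) / 2, 1, 1]]"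
  unfolding G3_def r7_def ..

definition G1_inv :: cmat where
  "G1_inv = vector [vector [1, -1, (-1 + i_r7) / 2], vector [0, 1, 1], vector [0, 0, 1]]"

definition G3_inv :: cmat where
  "G3_inv = vector [vector [1, 0, 0], vector [1, 1, 0], vector [(-1 - i_r7) / 2, -1, 1]]"

lemmas coords_3x3 = G1_coords G3_coords G1_inv_def G3_inv_def mat1_3x3
  matrix_matrix_mult_3x3 matrix_vector_mult_3x3 vector3_eq_iff

lemma G1_G1_inv: "G1 ** G1_inv = mat 1" and G1_inv_G1: "G1_inv ** G1 = mat 1"
  and G3_G3_inv: "G3 ** G3_inv = mat 1" and G3_inv_G3: "G3_inv ** G3 = mat 1"
  unfolding coords_3x3 by (simp_all add: field_simps)

lemma matrix_inv_G1: "matrix_inv G1 = G1_inv"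
  by (rule matrix_inv_eqI[OF G1_G1_inv G1_inv_G1])

lemma matrix_inv_G3: "matrix_inv G3 = G3_inv"
  by (rule matrix_inv_eqI[OF G3_G3_inv G3_inv_G3])

(* G2 = G3 G1^-1 G3^-1 G1, so its inverse is G1^-1 G3 G1 G3^-1. *)
lemma matrix_inv_G2: "matrix_inv G2 = G1_inv ** G3 ** G1 ** G3_inv"
proof (rule matrix_inv_eqI)
  have cancel: "G1 ** (G1_inv ** X) = X" "G1_inv ** (G1 ** X) = X"
    "G3 ** (G3_inv ** X) = X" "G3_inv ** (G3 ** X) = X" for X :: cmat
    by (simp_all add: matrix_mul_assoc G1_G1_inv G1_inv_G1 G3_G3_inv G3_inv_G3)
  show "G2 ** (G1_inv ** G3 ** G1 ** G3_inv) = mat 1"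
    and "G1_inv ** G3 ** G1 ** G3_inv ** G2 = mat 1"
    unfolding G2_def matrix_inv_G1 matrix_inv_G3
    by (simp_all add: matrix_mul_assoc[symmetric] cancel G1_inv_G1 G3_G3_inv)
qed

lemma mpow_Suc_0: "mpow A (Suc 0) = A"
  by (simp add: mpow_def)

lemma gamma_2: "gamma 2 = matrix_inv G2"
  and gamma_3: "gamma 3 = G3"
  and gamma_6: "gamma 6 = G1 ** matrix_inv G2 ** matrix_inv G1"
  and gamma_8: "gamma 8 = G1 ** matrix_inv G3 ** matrix_inv G1"
  by (simp_all add: gamma_def gamma_base_def mpow_Suc_0 Let_def)

lemma gamma_Q:
  "gamma 2 *v Qpt = vector [0, 0, -1]"
  "gamma 3 *v Qpt = vector [1, -1, (-1 + i_r7) / 2]"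
  "gamma 6 *v Qpt = vector [(1 + i_r7) / 2, 1, -1]"
  "gamma 8 *v Qpt = vector [(1 + i_r7) / 2, (3 + i_r7) / 2, - (1 + i_r7) / 2]"
  unfolding gamma_2 gamma_3 gamma_6 gamma_8 matrix_inv_G1 matrix_inv_G2 matrix_inv_G3
  unfolding Qpt_def matrix_vector_mul_assoc[symmetric] coords_3x3
  by (simp_all add: field_simps of_r7_square of_r7_square_left)

lemma herm_vector3: "herm Z (vector [v1, v2, v3]) = Z$1 * cnj v3 + Z$2 * cnj v2 + Z$3 * cnj v1"
  by (simp add: herm_def)

lemma herm_Q: "herm Z Qpt = Z$3"
  by (simp add: Qpt_def herm_vector3)

lemma sum_of_squares_identity:
  "2 * f 0 Z + f 2 Z + f 6 Z - f 3 Z - f 8 Z =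
   2 * (cmod (Z$1 - ((1 + i_r7) / 2) * Z$2))\<^sup>2 + 2 * (cmod (Z$2 + Z$3 / 2))\<^sup>2 + (cmod (Z$3))\<^sup>2 / 2"
  unfolding f_def gamma_Q herm_Q herm_vector3 cmod_power2
  by (simp add: herm_def field_simps power2_eq_square r7_square_left r7_square algebra_simps)

lemma weighted_sum_positive:
  assumes "Z \<noteq> 0"
  shows "2 * f 0 Z + f 2 Z + f 6 Z - f 3 Z - f 8 Z > 0"
proof -
  let ?a = "Z$1 - ((1 + i_r7) / 2) * Z$2" and ?b = "Z$2 + Z$3 / 2"
  have "Z$1 \<noteq> 0 \<or> Z$2 \<noteq> 0 \<or> Z$3 \<noteq> 0"
    using assms by (auto simp: vec_eq_iff forall_3)
  then have "?a \<noteq> 0 \<or> ?b \<noteq> 0 \<or> Z$3 \<noteq> 0"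
    by (metis add.right_neutral diff_zero div_0 mult_zero_right)
  then have "2 * (cmod ?a)\<^sup>2 + 2 * (cmod ?b)\<^sup>2 + (cmod (Z$3))\<^sup>2 / 2 > 0"
    by (auto simp: add_pos_nonneg add_nonneg_pos)
  then show ?thesis
    unfolding sum_of_squares_identity .
qed

(* A negative vector on B_3 \<inter> B_8: |<Z,gamma_3 Q>| = |<Z,gamma_8 Q>| = |<Z,Q>| = 30. *)
definition Z_witness :: cvec where
  "Z_witness = vector [-3 + \<i> * (6 - 5 * of_real r7), (-16 + 3 * of_real r7) + \<i> * (4 * of_real r7 - 3), 30]"

lemma Z_witness_herm:
  "herm Z_witness Qpt = 30"
  "herm Z_witness (gamma 3 *v Qpt) = 30"
  "herm Z_witness (gamma 8 *v Qpt) = 24 - 18 * \<i>"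
  "Re (herm Z_witness Z_witness) = 260 - 120 * r7"
  unfolding gamma_Q herm_Q herm_vector3 Z_witness_def
  by (simp_all add: herm_def complex_eq_iff field_simps r7_square_left r7_square)

(* Since sqrt 7 > 13/6, Z_witness is negative, so it lies in F_{{3,8},{0}}. *)
lemma Z_witness_in_F: "Z_witness \<in> F_JK {3, 8} {0}"
proof -
  have "13 / 6 < r7"
    unfolding r7_def by (rule real_less_rsqrt) (simp add: power2_eq_square)
  then have "f 0 Z_witness < 0"
    by (simp add: f_def Z_witness_herm)
  moreover have "f 3 Z_witness = 0" and "f 8 Z_witness = 0"
    by (simp_all add: f_def Z_witness_herm cmod_power2)
  moreover have "Z_witness \<noteq> 0"
    using Z_witness_herm(1) by (auto simp: herm_Q)
  ultimately show ?thesis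
    unfolding F_JK_def by auto
qed

theorem proposition5p8:
  shows "F_JK {3, 8} {0} \<noteq> {} \<and> Fbar_JK {3, 8} {0, 2, 6} = {} \<and> F_J {3, 8} = {}"
proof -
  have nonempty: "F_JK {3, 8} {0} \<noteq> {}"
    using Z_witness_in_F by blast
  have closed_empty: "Fbar_JK {3, 8} {0, 2, 6} = {}"
  proof -
    have False if "Z \<in> Fbar_JK {3, 8} {0, 2, 6}" for Z
    proof -
      from that have "Z \<noteq> 0" "f 3 Z = 0" "f 8 Z = 0" "f 0 Z \<le> 0" "f 2 Z \<le> 0" "f 6 Z \<le> 0"
        unfolding Fbar_JK_def by auto
      with weighted_sum_positive[of Z] show False
        by linarith
    qed
    then show ?thesis by blast
  qed
  have "F_J {3, 8} \<subseteq> Fbar_JK {3, 8} {0, 2, 6}"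
    unfolding F_J_def F_JK_def Fbar_JK_def by (auto simp: less_imp_le)
  with nonempty closed_empty show ?thesis
    by blast
qed

end
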